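(* Let $n\ge2$, $\omega\in(0,1)$, and let $B_1,\dots,B_n$ be independent lognormal service times with $m_i=\mathbb E\ln B_i$, $s_i^2=\mathrm{Var}\ln B_i$, $m_1\le\cdots\le m_n$, $s_1^2\le\cdots\le s_n^2$; let $\mu_i=\mathbb EB_i$. Let $\alpha=\frac1{\sqrt{2\omega}}\sqrt{\exp(s_{n-1}^2)-1}$. Then $$C(\mathrm{Id},(1+\alpha)\boldsymbol\mu,\omega)\le2\omega\alpha\sum_{i=1}^{n-1}\exp(m_i+s_i^2/2),$$ where $(1+\alpha)\boldsymbol\mu$ is the schedule with $x_i=(1+\alpha)\mu_i$.
   Context: Appointment model: a sequence is a permutation $\tau\in\mathsf S_n$, $\tau(i)$ the patient in slot $i$; a schedule is $\boldsymbol x=(x_1,\dots,x_n)$, $x_j$ the interarrival time between patient $j$ and the next patient. Waiting and idle times: $W_1=I_1=0$, $W_{i+1}=(W_i+B_{\tau(i)}-x_{\tau(i)})^+$, $I_{i+1}=(W_i+B_{\tau(i)}-x_{\tau(i)})^-$, $a^+=\max\{0,a\}$, $a^-=\max\{0,-a\}$. Cost $C(\tau,\boldsymbol x,\omega)=\omega\sum_{i=1}^n\mathbb EI_i+(1-\omega)\sum_{i=1}^n\mathbb EW_i$. $\mathrm{Id}$ is the identity permutation. *)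

theory Defs
  imports "HOL-Probability.Probability"
begin

text \<open>Waiting time W_i (index i >= 1; value at index 0 is junk 0) for sequence tau,
 schedule x (x j = interarrival time after patient j) and realized service times b.\<close>
fun appt_wait :: "(nat \<Rightarrow> nat) \<Rightarrow> (nat \<Rightarrow> real) \<Rightarrow> (nat \<Rightarrow> real) \<Rightarrow> nat \<Rightarrow> real" where
  "appt_wait \<tau> x b 0 = 0"
| "appt_wait \<tau> x b (Suc i) =
     (if i = 0 then 0 else max 0 (appt_wait \<tau> x b i + b (\<tau> i) - x (\<tau> i)))"

fun appt_idle :: "(nat \<Rightarrow> nat) \<Rightarrow> (nat \<Rightarrow> real) \<Rightarrow> (nat \<Rightarrow> real) \<Rightarrow> nat \<Rightarrow> real" where
  "appt_idle \<tau> x b 0 = 0"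
| "appt_idle \<tau> x b (Suc i) =
     (if i = 0 then 0 else max 0 (- (appt_wait \<tau> x b i + b (\<tau> i) - x (\<tau> i))))"

definition appt_cost ::
  "'a measure \<Rightarrow> nat \<Rightarrow> (nat \<Rightarrow> 'a \<Rightarrow> real) \<Rightarrow> (nat \<Rightarrow> nat) \<Rightarrow> (nat \<Rightarrow> real) \<Rightarrow> real \<Rightarrow> real" where
  "appt_cost M n B \<tau> x \<omega> =
     \<omega> * (\<Sum>i=1..n. integral\<^sup>L M (\<lambda>y. appt_idle \<tau> x (\<lambda>j. B j y) i))
   + (1 - \<omega>) * (\<Sum>i=1..n. integral\<^sup>L M (\<lambda>y. appt_wait \<tau> x (\<lambda>j. B j y) i))"

definition lognormal_rv :: "'a measure \<Rightarrow> ('a \<Rightarrow> real) \<Rightarrow> real \<Rightarrow> real \<Rightarrow> bool" where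
  "lognormal_rv M X \<mu> \<sigma> \<longleftrightarrow>
     0 < \<sigma> \<and> X \<in> borel_measurable M \<and> (\<forall>y\<in>space M. 0 < X y) \<and>
     distributed M lborel (\<lambda>y. ln (X y)) (normal_density \<mu> \<sigma>)"

end

theory Submission
  imports Defs
begin

text \<open>
  Write x_i = (1 + \<alpha>) \<mu>_i and X = W_i + B_i - x_i, so that W_(i+1) = X^+ and I_(i+1) = X^-.
  As W_i is a function of B_1, ..., B_(i-1), it is independent of B_i. Taking expectations of
  X = W_(i+1) - I_(i+1) and X^2 = W_(i+1)^2 + I_(i+1)^2, and using E I_(i+1)^2 \<ge> (E I_(i+1))^2,
  gives E I_(i+1) = E W_(i+1) - E W_i + \<alpha> \<mu>_i and
  E W_(i+1)^2 \<le> E W_i^2 + Var B_i - 2 \<alpha> \<mu>_i E W_(i+1).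
  For lognormal service times Var B_i = \<mu>_i^2 (exp s_i^2 - 1) \<le> 2 \<omega> \<alpha>^2 \<mu>_i^2 when i < n.
  Dividing by 2 \<alpha> \<mu>_i and summing, the second moments telescope against the nonincreasing
  weights 1 / \<mu>_i and start from W_1 = 0, so \<Sum> E W_i \<le> \<omega> \<alpha> \<Sum>_(i<n) \<mu>_i.
  The idle times telescope to E W_n + \<alpha> \<Sum>_(i<n) \<mu>_i, and E W_n \<le> \<Sum> E W_i, so the
  cost is at most \<Sum> E W_i + \<omega> \<alpha> \<Sum>_(i<n) \<mu>_i \<le> 2 \<omega> \<alpha> \<Sum>_(i<n) \<mu>_i.
\<close>

section \<open>Moments of lognormal random variables\<close>

lemma normal_density_mult_exp:
  assumes "0 < \<sigma>"
  shows "normal_density \<mu> \<sigma> x * exp (k * x)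
    = exp (k * \<mu> + k\<^sup>2 * \<sigma>\<^sup>2 / 2) * normal_density (\<mu> + k * \<sigma>\<^sup>2) \<sigma> x"
proof -
  have "exp (- (x - \<mu>)\<^sup>2 / (2 * \<sigma>\<^sup>2)) * exp (k * x)
      = exp (k * \<mu> + k\<^sup>2 * \<sigma>\<^sup>2 / 2) * exp (- (x - (\<mu> + k * \<sigma>\<^sup>2))\<^sup>2 / (2 * \<sigma>\<^sup>2))"
    unfolding exp_add [symmetric] using assms by (simp add: field_simps power2_eq_square)
  then show ?thesis
    unfolding normal_density_def by (simp add: algebra_simps)
qed

lemma
  assumes "lognormal_rv M X \<mu> \<sigma>"
  shows integrable_lognormal_powr: "integrable M (\<lambda>y. X y powr k)"
    and integral_lognormal_powr: "(\<integral>y. X y powr k \<partial>M) = exp (k * \<mu> + k\<^sup>2 * \<sigma>\<^sup>2 / 2)"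
proof -
  have \<sigma>: "0 < \<sigma>" and pos: "\<And>y. y \<in> space M \<Longrightarrow> 0 < X y"
    and D: "distributed M lborel (\<lambda>y. ln (X y)) (normal_density \<mu> \<sigma>)"
    using assms unfolding lognormal_rv_def by auto
  have powr_eq: "X y powr k = exp (k * ln (X y))" if "y \<in> space M" for y
    using pos [OF that] by (simp add: powr_def)
  have tilt: "(\<lambda>t. normal_density \<mu> \<sigma> t * exp (k * t))
      = (\<lambda>t. exp (k * \<mu> + k\<^sup>2 * \<sigma>\<^sup>2 / 2) * normal_density (\<mu> + k * \<sigma>\<^sup>2) \<sigma> t)"
    using normal_density_mult_exp [OF \<sigma>] by auto
  have "integrable lborel (\<lambda>t. normal_density \<mu> \<sigma> t * exp (k * t))"
    unfolding tilt using \<sigma> by simp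
  then have "integrable M (\<lambda>y. exp (k * ln (X y)))"
    using distributed_integrable [OF D, of "\<lambda>t. exp (k * t)"] by simp
  then show "integrable M (\<lambda>y. X y powr k)"
    by (subst Bochner_Integration.integrable_cong [OF refl powr_eq])
  have "(\<integral>y. X y powr k \<partial>M) = (\<integral>y. exp (k * ln (X y)) \<partial>M)"
    by (rule Bochner_Integration.integral_cong) (simp_all add: powr_eq)
  also have "\<dots> = (\<integral>t. normal_density \<mu> \<sigma> t * exp (k * t) \<partial>lborel)"
    using distributed_integral [OF D, of "\<lambda>t. exp (k * t)"] by simp
  also have "\<dots> = exp (k * \<mu> + k\<^sup>2 * \<sigma>\<^sup>2 / 2)"
    unfolding tilt using \<sigma> by simp
  finally show "(\<integral>y. X y powr k \<partial>M) = exp (k * \<mu> + k\<^sup>2 * \<sigma>\<^sup>2 / 2)" .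
qed

lemma
  assumes "lognormal_rv M X \<mu> \<sigma>"
  shows integrable_lognormal_power: "integrable M (\<lambda>y. X y ^ j)"
    and integral_lognormal_power: "(\<integral>y. X y ^ j \<partial>M) = exp (j * \<mu> + j\<^sup>2 * \<sigma>\<^sup>2 / 2)"
proof -
  have eq: "X y ^ j = X y powr real j" if "y \<in> space M" for y
    using assms that unfolding lognormal_rv_def by (simp add: powr_realpow)
  have "integrable M (\<lambda>y. X y ^ j) \<longleftrightarrow> integrable M (\<lambda>y. X y powr real j)"
    "(\<integral>y. X y ^ j \<partial>M) = (\<integral>y. X y powr real j \<partial>M)"
    by (intro Bochner_Integration.integrable_cong Bochner_Integration.integral_cong refl;
        simp add: eq)+
  then show "integrable M (\<lambda>y. X y ^ j)"
    "(\<integral>y. X y ^ j \<partial>M) = exp (j * \<mu> + j\<^sup>2 * \<sigma>\<^sup>2 / 2)"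
    by (simp_all add: integrable_lognormal_powr [OF assms] integral_lognormal_powr [OF assms])
qed

lemma lognormal_moments:
  assumes "lognormal_rv M X \<mu> \<sigma>"
  shows "integrable M X" and "integrable M (\<lambda>y. (X y)\<^sup>2)"
    and "(\<integral>y. X y \<partial>M) = exp (\<mu> + \<sigma>\<^sup>2 / 2)"
    and "(\<integral>y. (X y)\<^sup>2 \<partial>M) = exp (2 * \<mu> + 2 * \<sigma>\<^sup>2)"
  using integrable_lognormal_power [OF assms, of 1] integrable_lognormal_power [OF assms, of 2]
    integral_lognormal_power [OF assms, of 1] integral_lognormal_power [OF assms, of 2]
  by simp_all

lemma (in prob_space) lognormal_variance:
  assumes "lognormal_rv M X \<mu> \<sigma>"
  shows "variance X = (expectation X)\<^sup>2 * (exp (\<sigma>\<^sup>2) - 1)"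
  using lognormal_moments [OF assms]
  by (simp add: variance_eq prob_space algebra_simps power2_eq_square flip: exp_add)

lemma (in prob_space) lognormal_variance_le:
  assumes "lognormal_rv M X \<mu> \<sigma>" "\<sigma>\<^sup>2 \<le> t"
  shows "variance X \<le> (expectation X)\<^sup>2 * (exp t - 1)"
  unfolding lognormal_variance [OF assms(1)] using assms(2) by (intro mult_left_mono) auto

section \<open>One step of the Lindley recursion\<close>

context prob_space
begin

lemma
  fixes W B :: "'a \<Rightarrow> real" and x :: real
  assumes W: "W \<in> borel_measurable M" "integrable M (\<lambda>y. (W y)\<^sup>2)"
    and B: "B \<in> borel_measurable M" "integrable M (\<lambda>y. (B y)\<^sup>2)"
    and uncorrelated: "integrable M (\<lambda>y. W y * B y)"
      "expectation (\<lambda>y. W y * B y) = expectation W * expectation B"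
  shows lindley_step_square_integrable: "integrable M (\<lambda>y. (max 0 (W y + B y - x))\<^sup>2)"
    and lindley_step_idle: "expectation (\<lambda>y. max 0 (- (W y + B y - x)))
        = expectation (\<lambda>y. max 0 (W y + B y - x)) - expectation W - expectation B + x"
    and lindley_step_second_moment: "expectation (\<lambda>y. (max 0 (W y + B y - x))\<^sup>2)
        \<le> expectation (\<lambda>y. (W y)\<^sup>2) + variance B
           - 2 * (x - expectation B) * expectation (\<lambda>y. max 0 (W y + B y - x))"
proof -
  define X where "X y = W y + B y - x" for y
  define W' where "W' y = max 0 (X y)" for y
  define I' where "I' y = max 0 (- X y)" for y
  have int_W: "integrable M W" and int_B: "integrable M B"
    using W B by (auto intro: square_integrable_imp_integrable)
  have int_X: "integrable M X"
    unfolding X_def using int_W int_B by simp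
  have X2_eq: "(X y)\<^sup>2 = (W y)\<^sup>2 + 2 * (W y * B y) + (B y)\<^sup>2 - 2 * x * W y - 2 * x * B y + x\<^sup>2"
    for y unfolding X_def by (simp add: power2_eq_square algebra_simps)
  have int_X2: "integrable M (\<lambda>y. (X y)\<^sup>2)"
    unfolding X2_eq using W B int_W int_B uncorrelated by simp
  have E_X2: "expectation (\<lambda>y. (X y)\<^sup>2) = expectation (\<lambda>y. (W y)\<^sup>2) + variance B
      + (x - expectation B)\<^sup>2 - 2 * (x - expectation B) * expectation W"
  proof -
    have "expectation (\<lambda>y. (X y)\<^sup>2) = expectation (\<lambda>y. (W y)\<^sup>2)
        + 2 * (expectation W * expectation B) + expectation (\<lambda>y. (B y)\<^sup>2)
        - 2 * x * expectation W - 2 * x * expectation B + x\<^sup>2"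
      unfolding X2_eq using W B int_W int_B uncorrelated by (simp add: prob_space)
    then show ?thesis
      using variance_eq [OF int_B B(2)] by (simp add: power2_eq_square algebra_simps)
  qed
  have int_W': "integrable M W'"
    unfolding W'_def using int_X by simp
  have "(W' y)\<^sup>2 \<le> (X y)\<^sup>2" for y
    unfolding W'_def by (simp add: max_def)
  then have int_W'2: "integrable M (\<lambda>y. (W' y)\<^sup>2)"
    by (intro Bochner_Integration.integrable_bound [OF int_X2] AE_I2)
      (use W B in \<open>simp_all add: W'_def X_def\<close>)
  have I'_eq: "I' y = W' y - X y" and I'2_eq: "(I' y)\<^sup>2 = (X y)\<^sup>2 - (W' y)\<^sup>2" for y
    unfolding W'_def I'_def by (auto simp: max_def power2_eq_square)
  have int_I': "integrable M I'"
    unfolding I'_eq using int_X int_W' by simp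
  have int_I'2: "integrable M (\<lambda>y. (I' y)\<^sup>2)"
    unfolding I'2_eq using int_X2 int_W'2 by simp
  have E_I': "expectation I' = expectation W' - expectation W - expectation B + x"
    unfolding I'_eq using int_W' int_X int_W int_B by (simp add: X_def prob_space)
  have "(expectation I')\<^sup>2 \<le> expectation (\<lambda>y. (I' y)\<^sup>2)"
    using variance_eq [OF int_I' int_I'2] variance_positive [of I'] by simp
  also have "expectation (\<lambda>y. (I' y)\<^sup>2) = expectation (\<lambda>y. (X y)\<^sup>2) - expectation (\<lambda>y. (W' y)\<^sup>2)"
    unfolding I'2_eq using int_X2 int_W'2 by simp
  finally have "expectation (\<lambda>y. (W' y)\<^sup>2)
      \<le> expectation (\<lambda>y. (W y)\<^sup>2) + variance B - 2 * (x - expectation B) * expectation W'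
         - (expectation W' - expectation W)\<^sup>2"
    unfolding E_X2 E_I' by (simp add: power2_eq_square algebra_simps)
  moreover have "0 \<le> (expectation W' - expectation W)\<^sup>2"
    by simp
  ultimately show "expectation (\<lambda>y. (max 0 (W y + B y - x))\<^sup>2)
      \<le> expectation (\<lambda>y. (W y)\<^sup>2) + variance B
         - 2 * (x - expectation B) * expectation (\<lambda>y. max 0 (W y + B y - x))"
    unfolding W'_def X_def by linarith
  show "integrable M (\<lambda>y. (max 0 (W y + B y - x))\<^sup>2)"
    using int_W'2 unfolding W'_def X_def .
  show "expectation (\<lambda>y. max 0 (- (W y + B y - x)))
      = expectation (\<lambda>y. max 0 (W y + B y - x)) - expectation W - expectation B + x"
    using E_I' unfolding I'_def W'_def X_def .
qed

end

section \<open>Summation by parts with monotone weights\<close>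

lemma sum_telescope_divide_le:
  fixes q \<mu> :: "nat \<Rightarrow> real"
  assumes "1 \<le> N" "\<And>i. 0 \<le> q i"
    and "\<And>i. 1 \<le> i \<Longrightarrow> i \<le> N \<Longrightarrow> 0 < \<mu> i"
    and "\<And>i. 1 \<le> i \<Longrightarrow> i < N \<Longrightarrow> \<mu> i \<le> \<mu> (Suc i)"
  shows "(\<Sum>i=1..N. (q i - q (Suc i)) / \<mu> i) \<le> q 1 / \<mu> 1 - q (Suc N) / \<mu> N"
  using assms
proof (induction N)
  case (Suc N)
  show ?case
  proof (cases "N = 0")
    case False
    then have "(\<Sum>i=1..N. (q i - q (Suc i)) / \<mu> i) \<le> q 1 / \<mu> 1 - q (Suc N) / \<mu> N"
      using Suc by auto
    moreover have "q (Suc N) / \<mu> (Suc N) \<le> q (Suc N) / \<mu> N"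
      using Suc.prems False by (intro divide_left_mono) auto
    ultimately show ?thesis
      by (simp add: diff_divide_distrib)
  qed (simp add: diff_divide_distrib)
qed simp

lemma sum_le_of_descent:
  fixes w q \<mu> :: "nat \<Rightarrow> real"
  assumes "0 < \<alpha>" "q 1 = 0" "\<And>i. 0 \<le> q i"
    and \<mu>_pos: "\<And>i. 1 \<le> i \<Longrightarrow> i \<le> N \<Longrightarrow> 0 < \<mu> i"
    and \<mu>_mono: "\<And>i. 1 \<le> i \<Longrightarrow> i < N \<Longrightarrow> \<mu> i \<le> \<mu> (Suc i)"
    and descent: "\<And>i. 1 \<le> i \<Longrightarrow> i \<le> N \<Longrightarrow>
      q (Suc i) \<le> q i + 2 * \<omega> * \<alpha>\<^sup>2 * (\<mu> i)\<^sup>2 - 2 * \<alpha> * \<mu> i * w (Suc i)"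
  shows "(\<Sum>i=1..N. w (Suc i)) \<le> \<omega> * \<alpha> * (\<Sum>i=1..N. \<mu> i)"
proof -
  have "w (Suc i) \<le> (q i - q (Suc i)) / \<mu> i / (2 * \<alpha>) + \<omega> * \<alpha> * \<mu> i"
    if "1 \<le> i" "i \<le> N" for i
  proof -
    have pos: "0 < 2 * \<alpha> * \<mu> i"
      using \<mu>_pos [OF that] \<open>0 < \<alpha>\<close> by simp
    have "w (Suc i) * (2 * \<alpha> * \<mu> i) \<le> q i - q (Suc i) + \<omega> * \<alpha> * \<mu> i * (2 * \<alpha> * \<mu> i)"
      using descent [OF that] by (simp add: power2_eq_square algebra_simps)
    then have "w (Suc i) \<le> (q i - q (Suc i) + \<omega> * \<alpha> * \<mu> i * (2 * \<alpha> * \<mu> i)) / (2 * \<alpha> * \<mu> i)"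
      using pos by (simp add: pos_le_divide_eq)
    also have "\<dots> = (q i - q (Suc i)) / \<mu> i / (2 * \<alpha>) + \<omega> * \<alpha> * \<mu> i"
      using pos by (simp add: add_divide_distrib divide_divide_eq_left mult.commute)
    finally show ?thesis .
  qed
  then have "(\<Sum>i=1..N. w (Suc i))
      \<le> (\<Sum>i=1..N. (q i - q (Suc i)) / \<mu> i / (2 * \<alpha>) + \<omega> * \<alpha> * \<mu> i)"
    by (intro sum_mono) auto
  also have "\<dots> = (\<Sum>i=1..N. (q i - q (Suc i)) / \<mu> i) / (2 * \<alpha>) + \<omega> * \<alpha> * (\<Sum>i=1..N. \<mu> i)"
    by (simp add: sum.distrib sum_divide_distrib sum_distrib_left)
  also have "\<dots> \<le> \<omega> * \<alpha> * (\<Sum>i=1..N. \<mu> i)"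
  proof -
    have "(\<Sum>i=1..N. (q i - q (Suc i)) / \<mu> i) \<le> 0"
    proof (cases "N = 0")
      case False
      then have "0 \<le> q (Suc N) / \<mu> N"
        using assms(3) \<mu>_pos [of N] by simp
      with False show ?thesis
        using sum_telescope_divide_le [of N q \<mu>] assms by simp
    qed simp
    then show ?thesis
      using \<open>0 < \<alpha>\<close> by (simp add: divide_nonpos_pos)
  qed
  finally show ?thesis .
qed

section \<open>Waiting times of an appointment schedule\<close>

lemma appt_wait_nonneg: "0 \<le> appt_wait \<tau> x b i"
  by (cases i) auto

lemma appt_wait_cong:
  assumes "\<And>j. j \<in> {1..<i} \<Longrightarrow> b (\<tau> j) = b' (\<tau> j)"
  shows "appt_wait \<tau> x b i = appt_wait \<tau> x b' i"
  using assms by (induction i) auto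

lemma appt_wait_restrict:
  "appt_wait \<tau> x (restrict b (\<tau> ` {1..<i})) i = appt_wait \<tau> x b i"
  by (rule appt_wait_cong) simp

lemma measurable_appt_wait:
  "\<tau> ` {1..<i} \<subseteq> K \<Longrightarrow> (\<lambda>b. appt_wait \<tau> x b i) \<in> borel_measurable (PiM K (\<lambda>_. borel))"
proof (induction i)
  case (Suc i)
  have "{1..<i} \<subseteq> {1..<Suc i}"
    by auto
  then have "\<tau> ` {1..<i} \<subseteq> K"
    using Suc.prems by (blast dest: image_mono)
  then have [measurable]: "(\<lambda>b. appt_wait \<tau> x b i) \<in> borel_measurable (PiM K (\<lambda>_. borel))"
    by (rule Suc.IH)
  show ?case
  proof (cases "i = 0")
    case False
    with Suc.prems have [measurable]: "\<tau> i \<in> K"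
      by auto
    with False show ?thesis
      by simp
  qed simp
qed simp

lemma borel_measurable_appt_wait:
  assumes "\<And>j. j \<in> \<tau> ` {1..<i} \<Longrightarrow> B j \<in> borel_measurable M"
  shows "(\<lambda>y. appt_wait \<tau> x (\<lambda>j. B j y) i) \<in> borel_measurable M"
proof -
  have "(\<lambda>b. appt_wait \<tau> x b i) \<circ> (\<lambda>y. restrict (\<lambda>j. B j y) (\<tau> ` {1..<i}))
      \<in> borel_measurable M"
    using assms by (intro measurable_comp [OF measurable_restrict measurable_appt_wait]) auto
  then show ?thesis
    by (simp only: comp_def appt_wait_restrict)
qed

lemma (in prob_space) indep_var_appt_wait:
  assumes indep: "indep_vars (\<lambda>_. borel) B K"
    and "\<tau> ` {1..i} \<subseteq> K" "inj_on \<tau> {1..i}" "1 \<le> i"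
  shows "indep_var borel (\<lambda>y. appt_wait \<tau> x (\<lambda>j. B j y) i) borel (B (\<tau> i))"
proof -
  have "\<tau> ` {1..<i} \<inter> {\<tau> i} = {}"
    using assms(3,4) by (auto dest: inj_onD)
  then have "indep_var (PiM (\<tau> ` {1..<i}) (\<lambda>_. borel)) (\<lambda>y. restrict (\<lambda>j. B j y) (\<tau> ` {1..<i}))
      (PiM {\<tau> i} (\<lambda>_. borel)) (\<lambda>y. restrict (\<lambda>j. B j y) {\<tau> i})"
    using assms(2,4) by (intro indep_var_restrict [OF indep]) auto
  then have "indep_var
      borel ((\<lambda>b. appt_wait \<tau> x b i) \<circ> (\<lambda>y. restrict (\<lambda>j. B j y) (\<tau> ` {1..<i})))
      borel ((\<lambda>b. b (\<tau> i)) \<circ> (\<lambda>y. restrict (\<lambda>j. B j y) {\<tau> i}))"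
    by (rule indep_var_compose) (auto intro: measurable_appt_wait)
  then show ?thesis
    by (simp only: comp_def appt_wait_restrict) simp
qed

locale appointment_model = prob_space +
  fixes B :: "nat \<Rightarrow> 'a \<Rightarrow> real" and K :: "nat set"
  assumes indep_service: "indep_vars (\<lambda>_. borel) B K"
    and square_integrable_service: "\<And>j. j \<in> K \<Longrightarrow> integrable M (\<lambda>y. (B j y)\<^sup>2)"
begin

abbreviation wait_time :: "(nat \<Rightarrow> nat) \<Rightarrow> (nat \<Rightarrow> real) \<Rightarrow> nat \<Rightarrow> 'a \<Rightarrow> real" where
  "wait_time \<tau> x i \<equiv> \<lambda>y. appt_wait \<tau> x (\<lambda>j. B j y) i"

abbreviation idle_time :: "(nat \<Rightarrow> nat) \<Rightarrow> (nat \<Rightarrow> real) \<Rightarrow> nat \<Rightarrow> 'a \<Rightarrow> real" where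
  "idle_time \<tau> x i \<equiv> \<lambda>y. appt_idle \<tau> x (\<lambda>j. B j y) i"

lemma borel_measurable_service: "j \<in> K \<Longrightarrow> B j \<in> borel_measurable M"
  using indep_service by (simp add: indep_vars_def)

lemma integrable_service: "j \<in> K \<Longrightarrow> integrable M (B j)"
  using square_integrable_service borel_measurable_service
  by (blast intro: square_integrable_imp_integrable)

lemma borel_measurable_wait: "\<tau> ` {1..<i} \<subseteq> K \<Longrightarrow> wait_time \<tau> x i \<in> borel_measurable M"
  by (rule borel_measurable_appt_wait) (auto intro: borel_measurable_service)

lemma
  assumes "\<tau> ` {1..i} \<subseteq> K" "inj_on \<tau> {1..i}" "1 \<le> i"
    and square_integrable: "integrable M (\<lambda>y. (wait_time \<tau> x i y)\<^sup>2)"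
  shows square_integrable_wait_Suc: "integrable M (\<lambda>y. (wait_time \<tau> x (Suc i) y)\<^sup>2)"
    and integral_idle_Suc: "expectation (idle_time \<tau> x (Suc i))
      = expectation (wait_time \<tau> x (Suc i)) - expectation (wait_time \<tau> x i) + x (\<tau> i) - expectation (B (\<tau> i))"
    and second_moment_wait_Suc: "expectation (\<lambda>y. (wait_time \<tau> x (Suc i) y)\<^sup>2)
      \<le> expectation (\<lambda>y. (wait_time \<tau> x i y)\<^sup>2) + variance (B (\<tau> i))
         - 2 * (x (\<tau> i) - expectation (B (\<tau> i))) * expectation (wait_time \<tau> x (Suc i))"
proof -
  have K: "\<tau> ` {1..<i} \<subseteq> K" "\<tau> i \<in> K"
    using assms(1,3) by auto
  have indep: "indep_var borel (wait_time \<tau> x i) borel (B (\<tau> i))"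
    using indep_var_appt_wait [OF indep_service assms(1-3)] .
  have W: "wait_time \<tau> x i \<in> borel_measurable M" "integrable M (wait_time \<tau> x i)"
    using borel_measurable_wait [OF K(1)] square_integrable
    by (auto intro: square_integrable_imp_integrable)
  note lindley = lindley_step_square_integrable lindley_step_idle lindley_step_second_moment
  note step = lindley [OF W(1) square_integrable borel_measurable_service [OF K(2)]
      square_integrable_service [OF K(2)]
      indep_var_integrable [OF indep W(2) integrable_service [OF K(2)]]
      indep_var_lebesgue_integral [OF indep W(2) integrable_service [OF K(2)]], of "x (\<tau> i)"]
  show "integrable M (\<lambda>y. (wait_time \<tau> x (Suc i) y)\<^sup>2)"
    "expectation (idle_time \<tau> x (Suc i))
      = expectation (wait_time \<tau> x (Suc i)) - expectation (wait_time \<tau> x i) + x (\<tau> i) - expectation (B (\<tau> i))"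
    "expectation (\<lambda>y. (wait_time \<tau> x (Suc i) y)\<^sup>2)
      \<le> expectation (\<lambda>y. (wait_time \<tau> x i y)\<^sup>2) + variance (B (\<tau> i))
         - 2 * (x (\<tau> i) - expectation (B (\<tau> i))) * expectation (wait_time \<tau> x (Suc i))"
    using step assms(3) by simp_all
qed

lemma square_integrable_wait:
  "\<tau> ` {1..<i} \<subseteq> K \<Longrightarrow> inj_on \<tau> {1..<i} \<Longrightarrow> integrable M (\<lambda>y. (wait_time \<tau> x i y)\<^sup>2)"
proof (induction i)
  case (Suc i)
  show ?case
  proof (cases "i = 0")
    case False
    have "{1..<i} \<subseteq> {1..<Suc i}"
      by auto
    with Suc.prems have "integrable M (\<lambda>y. (wait_time \<tau> x i y)\<^sup>2)"
      by (blast intro: Suc.IH dest: image_mono inj_on_subset)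
    with Suc.prems False show ?thesis
      by (intro square_integrable_wait_Suc) (auto simp: atLeastLessThanSuc_atLeastAtMost)
  qed simp
qed simp

lemma appt_cost_eq:
  assumes "\<tau> ` {1..<n} \<subseteq> K" "inj_on \<tau> {1..<n}" "1 \<le> n"
  shows "appt_cost M n B \<tau> x \<omega>
    = \<omega> * (expectation (wait_time \<tau> x n) + (\<Sum>i=1..n-1. x (\<tau> i) - expectation (B (\<tau> i))))
      + (1 - \<omega>) * (\<Sum>i=1..n-1. expectation (wait_time \<tau> x (Suc i)))"
proof -
  obtain N where n: "n = Suc N"
    using assms(3) by (cases n) auto
  have split: "(\<Sum>i=1..n. f i) = f 1 + (\<Sum>i=1..N. f (Suc i))" for f :: "nat \<Rightarrow> real"
  proof -
    have "(\<Sum>i=1..n. f i) = (\<Sum>i=0..N. f (Suc i))"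
      unfolding n using sum.shift_bounds_cl_Suc_ivl [of f 0 N] by simp
    also have "\<dots> = f 1 + (\<Sum>i=1..N. f (Suc i))"
      by (simp add: sum.atLeast_Suc_atMost)
    finally show ?thesis .
  qed
  have "expectation (idle_time \<tau> x (Suc i))
      = expectation (wait_time \<tau> x (Suc i)) - expectation (wait_time \<tau> x i)
        + x (\<tau> i) - expectation (B (\<tau> i))" if "1 \<le> i" "i \<le> N" for i
  proof (rule integral_idle_Suc [OF _ _ that(1) square_integrable_wait])
    show "\<tau> ` {1..i} \<subseteq> K" "inj_on \<tau> {1..i}" "\<tau> ` {1..<i} \<subseteq> K" "inj_on \<tau> {1..<i}"
      using assms(1,2) that n by (auto elim!: inj_on_subset)
  qed
  then have "(\<Sum>i=1..N. expectation (idle_time \<tau> x (Suc i)))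
      = (\<Sum>i=1..N. expectation (wait_time \<tau> x (Suc i)) - expectation (wait_time \<tau> x i))
        + (\<Sum>i=1..N. x (\<tau> i) - expectation (B (\<tau> i)))"
    by (simp del: appt_wait.simps appt_idle.simps add: sum.distrib [symmetric] add_diff_eq)
  also have "\<dots> = expectation (wait_time \<tau> x n) + (\<Sum>i=1..N. x (\<tau> i) - expectation (B (\<tau> i)))"
    using sum_Suc_diff [of 1 N "\<lambda>i. expectation (wait_time \<tau> x i)"] n by simp
  finally have "(\<Sum>i=1..N. expectation (idle_time \<tau> x (Suc i)))
      = expectation (wait_time \<tau> x n) + (\<Sum>i=1..N. x (\<tau> i) - expectation (B (\<tau> i)))" .
  moreover have "expectation (idle_time \<tau> x 1) = 0" "expectation (wait_time \<tau> x 1) = 0"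
    by simp_all
  ultimately show ?thesis
    unfolding appt_cost_def split [of "\<lambda>i. expectation (idle_time \<tau> x i)"]
      split [of "\<lambda>i. expectation (wait_time \<tau> x i)"]
    by (simp del: appt_wait.simps appt_idle.simps add: n)
qed

lemma appt_cost_le:
  assumes "\<tau> ` {1..<n} \<subseteq> K" "inj_on \<tau> {1..<n}" "1 \<le> n" "0 \<le> \<omega>" "\<omega> \<le> 1" "0 < \<alpha>"
    and mean_pos: "\<And>i. 1 \<le> i \<Longrightarrow> i < n \<Longrightarrow> 0 < expectation (B (\<tau> i))"
    and mean_mono: "\<And>i. 1 \<le> i \<Longrightarrow> Suc i < n \<Longrightarrow> expectation (B (\<tau> i)) \<le> expectation (B (\<tau> (Suc i)))"
    and variance_le: "\<And>i. 1 \<le> i \<Longrightarrow> i < n \<Longrightarrow>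
      variance (B (\<tau> i)) \<le> 2 * \<omega> * \<alpha>\<^sup>2 * (expectation (B (\<tau> i)))\<^sup>2"
  shows "appt_cost M n B \<tau> (\<lambda>j. (1 + \<alpha>) * expectation (B j)) \<omega>
    \<le> 2 * \<omega> * \<alpha> * (\<Sum>i=1..n-1. expectation (B (\<tau> i)))"
proof -
  define x where "x j = (1 + \<alpha>) * expectation (B j)" for j
  define \<mu> where "\<mu> i = expectation (B (\<tau> i))" for i
  define w where "w i = expectation (wait_time \<tau> x i)" for i
  define q where "q i = expectation (\<lambda>y. (wait_time \<tau> x i y)\<^sup>2)" for i
  have descent: "q (Suc i) \<le> q i + 2 * \<omega> * \<alpha>\<^sup>2 * (\<mu> i)\<^sup>2 - 2 * \<alpha> * \<mu> i * w (Suc i)"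
    if "1 \<le> i" "i \<le> n - 1" for i
  proof -
    have "{1..i} \<subseteq> {1..<n}" "{1..<i} \<subseteq> {1..<n}"
      using that by auto
    then have "\<tau> ` {1..i} \<subseteq> K" "inj_on \<tau> {1..i}" "\<tau> ` {1..<i} \<subseteq> K" "inj_on \<tau> {1..<i}"
      using assms(1,2) by (blast dest: image_mono intro: inj_on_subset)+
    from second_moment_wait_Suc [OF this(1,2) that(1) square_integrable_wait [OF this(3,4)]]
    have "q (Suc i) \<le> q i + variance (B (\<tau> i)) - 2 * (x (\<tau> i) - \<mu> i) * w (Suc i)"
      unfolding q_def w_def \<mu>_def by simp
    moreover have "variance (B (\<tau> i)) \<le> 2 * \<omega> * \<alpha>\<^sup>2 * (\<mu> i)\<^sup>2"
      using variance_le [of i] that unfolding \<mu>_def by simp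
    ultimately show ?thesis
      unfolding x_def \<mu>_def by (simp add: algebra_simps)
  qed
  have wait_sum: "(\<Sum>i=1..n-1. w (Suc i)) \<le> \<omega> * \<alpha> * (\<Sum>i=1..n-1. \<mu> i)"
  proof (rule sum_le_of_descent [where w = w and q = q and \<mu> = \<mu>, OF \<open>0 < \<alpha>\<close> _ _ _ _ descent])
    show "q 1 = 0" "0 \<le> q i" for i
      unfolding q_def by simp_all
  qed (use assms(3) mean_pos mean_mono in \<open>auto simp: \<mu>_def\<close>)
  have "w n \<le> (\<Sum>i=1..n-1. w (Suc i))"
    using assms(3) member_le_sum [of "n - 1" "{1..n-1}" "\<lambda>i. w (Suc i)"]
    by (cases "n = 1") (simp_all add: w_def appt_wait_nonneg)
  have "appt_cost M n B \<tau> x \<omega>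
      = \<omega> * w n + \<omega> * \<alpha> * (\<Sum>i=1..n-1. \<mu> i) + (1 - \<omega>) * (\<Sum>i=1..n-1. w (Suc i))"
  proof -
    have "(\<Sum>i=1..n-1. x (\<tau> i) - \<mu> i) = \<alpha> * (\<Sum>i=1..n-1. \<mu> i)"
      unfolding x_def \<mu>_def by (simp add: sum_distrib_left algebra_simps)
    then show ?thesis
      using appt_cost_eq [OF assms(1-3), of x \<omega>] unfolding w_def \<mu>_def
      by (simp del: appt_wait.simps appt_idle.simps add: algebra_simps)
  qed
  also have "\<dots> \<le> \<omega> * (\<Sum>i=1..n-1. w (Suc i)) + \<omega> * \<alpha> * (\<Sum>i=1..n-1. \<mu> i)
      + (1 - \<omega>) * (\<Sum>i=1..n-1. w (Suc i))"
    using \<open>w n \<le> (\<Sum>i=1..n-1. w (Suc i))\<close> assms(4) by (simp add: mult_left_mono)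
  also have "\<dots> = (\<Sum>i=1..n-1. w (Suc i)) + \<omega> * \<alpha> * (\<Sum>i=1..n-1. \<mu> i)"
    by (simp add: algebra_simps)
  also have "\<dots> \<le> 2 * \<omega> * \<alpha> * (\<Sum>i=1..n-1. \<mu> i)"
    using wait_sum by (simp add: algebra_simps)
  finally show ?thesis
    unfolding x_def \<mu>_def .
qed

end

theorem propositionC1:
  fixes M :: "'a measure" and n :: nat and \<omega> :: real
    and B :: "nat \<Rightarrow> 'a \<Rightarrow> real" and m s :: "nat \<Rightarrow> real"
  assumes "prob_space M"
    and "n \<ge> 2"
    and "0 < \<omega>" and "\<omega> < 1"
    and "prob_space.indep_vars M (\<lambda>_. borel) B {1..n}"
    and "\<And>i. i \<in> {1..n} \<Longrightarrow> lognormal_rv M (B i) (m i) (s i)"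
    and "\<And>i j. 1 \<le> i \<Longrightarrow> i \<le> j \<Longrightarrow> j \<le> n \<Longrightarrow> m i \<le> m j"
    and "\<And>i j. 1 \<le> i \<Longrightarrow> i \<le> j \<Longrightarrow> j \<le> n \<Longrightarrow> (s i)\<^sup>2 \<le> (s j)\<^sup>2"
  shows "let \<alpha> = 1 / sqrt (2 * \<omega>) * sqrt (exp ((s (n - 1))\<^sup>2) - 1);
             \<mu> = (\<lambda>i. integral\<^sup>L M (B i))
         in appt_cost M n B id (\<lambda>i. (1 + \<alpha>) * \<mu> i) \<omega>
            \<le> 2 * \<omega> * \<alpha> * (\<Sum>i=1..n-1. exp (m i + (s i)\<^sup>2 / 2))"
proof -
  have "appointment_model M B {1..n}"
    using assms(1,5) lognormal_moments(2) [OF assms(6)]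
    by (simp add: appointment_model_def appointment_model_axioms_def)
  then interpret appointment_model M B "{1..n}" .
  define \<alpha> where "\<alpha> = 1 / sqrt (2 * \<omega>) * sqrt (exp ((s (n - 1))\<^sup>2) - 1)"
  have mean: "expectation (B i) = exp (m i + (s i)\<^sup>2 / 2)" if "i \<in> {1..n}" for i
    using lognormal_moments(3) [OF assms(6) [OF that]] .
  have "0 < s (n - 1)"
    using assms(2,6) unfolding lognormal_rv_def by auto
  then have "0 < \<alpha>" and \<alpha>_sq: "2 * \<omega> * \<alpha>\<^sup>2 = exp ((s (n - 1))\<^sup>2) - 1"
    using assms(3) unfolding \<alpha>_def by (simp_all add: power_mult_distrib power_divide)
  have "appt_cost M n B id (\<lambda>j. (1 + \<alpha>) * expectation (B j)) \<omega>
      \<le> 2 * \<omega> * \<alpha> * (\<Sum>i=1..n-1. expectation (B (id i)))"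
  proof (rule appt_cost_le)
    show "expectation (B (id i)) \<le> expectation (B (id (Suc i)))" if "1 \<le> i" "Suc i < n" for i
      using that assms(7,8) [of i "Suc i"] by (simp add: mean)
    show "variance (B (id i)) \<le> 2 * \<omega> * \<alpha>\<^sup>2 * (expectation (B (id i)))\<^sup>2" if "1 \<le> i" "i < n" for i
      using lognormal_variance_le [OF assms(6), of i "(s (n - 1))\<^sup>2"] that assms(8) [of i "n - 1"]
      unfolding \<alpha>_sq by (simp add: mult.commute)
  qed (use assms(2-4) \<open>0 < \<alpha>\<close> in \<open>auto simp: mean\<close>)
  moreover have "(\<Sum>i=1..n-1. expectation (B (id i))) = (\<Sum>i=1..n-1. exp (m i + (s i)\<^sup>2 / 2))"
    using assms(2) by (intro sum.cong) (auto simp: mean)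
  ultimately show ?thesis
    unfolding Let_def \<alpha>_def [symmetric] by simp
qed

end
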